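(* Let $A,B,B'$ be clusterings of $\{1,\dots,n\}$ with $1<k_A<n$, and let $B'$ be an $A$-consistent improvement of $B$. Then $\mathrm{NMI}(A,B')>\mathrm{NMI}(A,B)$ and $\mathrm{VI}(A,B')<\mathrm{VI}(A,B)$.
   Context: For a clustering $A=\{A_1,\dots,A_{k_A}\}$ of $\{1,\dots,n\}$, $H(A)=-\sum_i\frac{|A_i|}n\log\frac{|A_i|}n$; the joint entropy $H(A,B)$ is the Shannon entropy of the distribution $(p_{ij})$ with $p_{ij}=|A_i\cap B_j|/n$; the mutual information is $M(A,B)=H(A)+H(B)-H(A,B)$. $\mathrm{NMI}(A,B)=\frac{M(A,B)}{(H(A)+H(B))/2}$ and $\mathrm{VI}(A,B)=2H(A,B)-H(A)-H(B)$. A pair of distinct elements agrees in $A$ and $B$ if it lies in a common cluster in both or in neither; $B'$ is an $A$-consistent improvement of $B$ if $B'\neq B$ and every pair agreeing in $A$ and $B$ also agrees in $A$ and $B'$. *)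

theory Defs
  imports Complex_Main "HOL-Library.Disjoint_Sets"
begin

definition clustering :: "nat \<Rightarrow> nat set set \<Rightarrow> bool" where
  "clustering n A \<longleftrightarrow> partition_on {1..n} A"

definition ent_term :: "real \<Rightarrow> real" where
  "ent_term p = (if p = 0 then 0 else - p * ln p)"

definition H :: "nat \<Rightarrow> nat set set \<Rightarrow> real" where
  "H n A = (\<Sum>C\<in>A. ent_term (real (card C) / real n))"

definition H2 :: "nat \<Rightarrow> nat set set \<Rightarrow> nat set set \<Rightarrow> real" where
  "H2 n A B = (\<Sum>(C, D)\<in>A \<times> B. ent_term (real (card (C \<inter> D)) / real n))"

definition MI :: "nat \<Rightarrow> nat set set \<Rightarrow> nat set set \<Rightarrow> real" where
  "MI n A B = H n A + H n B - H2 n A B"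

definition NMI :: "nat \<Rightarrow> nat set set \<Rightarrow> nat set set \<Rightarrow> real" where
  "NMI n A B = MI n A B / ((H n A + H n B) / 2)"

definition VI :: "nat \<Rightarrow> nat set set \<Rightarrow> nat set set \<Rightarrow> real" where
  "VI n A B = 2 * H2 n A B - H n A - H n B"

definition same_cluster :: "nat set set \<Rightarrow> nat \<Rightarrow> nat \<Rightarrow> bool" where
  "same_cluster A x y \<longleftrightarrow> (\<exists>C\<in>A. x \<in> C \<and> y \<in> C)"

definition agrees :: "nat set set \<Rightarrow> nat set set \<Rightarrow> nat \<Rightarrow> nat \<Rightarrow> bool" where
  "agrees A B x y \<longleftrightarrow> (same_cluster A x y \<longleftrightarrow> same_cluster B x y)"

definition consistent_improvement ::
  "nat \<Rightarrow> nat set set \<Rightarrow> nat set set \<Rightarrow> nat set set \<Rightarrow> bool" where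
  "consistent_improvement n A B B' \<longleftrightarrow> B' \<noteq> B \<and>
     (\<forall>x\<in>{1..n}. \<forall>y\<in>{1..n}. x \<noteq> y \<longrightarrow> agrees A B x y \<longrightarrow> agrees A B' x y)"

end

theory Submission
  imports Defs
begin

text \<open>
  Writing \<open>P(x)\<close> for the cluster of \<open>x\<close>, entropies are averages over the points:
  \<open>H(P) = ln n - (1/n) \<Sum>x. ln |P(x)|\<close> and \<open>H(A,B) = ln n - (1/n) \<Sum>x. ln |A(x) \<inter> B(x)|\<close>.
  The agreement condition forces, at every point, \<open>A(x) \<inter> B(x) \<subseteq> B'(x)\<close> and
  \<open>B'(x) \<subseteq> A(x)\<close> or \<open>B'(x) \<subseteq> B(x)\<close>. Hence pointwise \<open>|A(x) \<inter> B(x)| \<le> |A(x) \<inter> B'(x)|\<close> and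
  \<open>|B'(x)| / |A(x) \<inter> B'(x)| \<le> |B(x)| / |A(x) \<inter> B(x)|\<close>: neither the joint entropy \<open>H(A,B')\<close> nor
  the conditional entropy \<open>H(A|B') = H(A,B') - H(B')\<close> exceeds its value for \<open>B\<close>. As \<open>B' \<noteq> B\<close>, one
  of them drops strictly; if only the joint one does, some cluster of \<open>B\<close> lies inside a cluster of
  \<open>A\<close> other than the whole set, and the strict Gibbs inequality gives \<open>M(A,B) > 0\<close>.
  Now \<open>VI = H(A,B) + H(A|B) - H(A)\<close> decreases, and \<open>NMI = 2 - 2 H(A,B) / (H(A) + H(B))\<close>
  increases because \<open>H(A,B) (H(A) + H(B')) - H(A,B') (H(A) + H(B))\<close> equals
  \<open>H(A,B) \<Delta>H(A|B) + \<Delta>H(A,B) M(A,B) > 0\<close>.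
\<close>

definition block :: "'a set set \<Rightarrow> 'a \<Rightarrow> 'a set" where
  "block P x = {y. \<exists>C\<in>P. x \<in> C \<and> y \<in> C}"

lemma block_eq:
  assumes P: "partition_on S P" and "C \<in> P" "x \<in> C"
  shows "block P x = C"
proof -
  have "D = C" if "D \<in> P" "x \<in> D" for D
    using disjointD[OF partition_onD2[OF P] that(1) \<open>C \<in> P\<close>] that(2) \<open>x \<in> C\<close> by blast
  then show ?thesis using \<open>C \<in> P\<close> \<open>x \<in> C\<close> unfolding block_def by blast
qed

lemma
  assumes P: "partition_on S P" and x: "x \<in> S"
  shows block_mem: "block P x \<in> P" and in_block_self: "x \<in> block P x"
proof -
  obtain C where "C \<in> P" "x \<in> C" using partition_onD1[OF P] x by blast
  then show "block P x \<in> P" "x \<in> block P x" using block_eq[OF P] by auto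
qed

lemma block_subset:
  assumes "partition_on S P" "x \<in> S"
  shows "block P x \<subseteq> S"
  using Union_upper[OF block_mem[OF assms]] partition_onD1[OF assms(1)] by simp

lemma block_eq_block: "partition_on S P \<Longrightarrow> x \<in> S \<Longrightarrow> y \<in> block P x \<Longrightarrow> block P y = block P x"
  using block_eq block_mem by metis

lemma finite_block: "partition_on S P \<Longrightarrow> finite S \<Longrightarrow> x \<in> S \<Longrightarrow> finite (block P x)"
  using block_subset finite_subset by metis

lemma finite_block_member: "partition_on S P \<Longrightarrow> finite S \<Longrightarrow> C \<in> P \<Longrightarrow> finite C"
  by (metis Union_upper finite_subset partition_onD1)

lemma partition_on_eq_image_block: "partition_on S P \<Longrightarrow> P = block P ` S"
  using partition_on_eq_quotient[of S P] by (simp add: quotient_def block_def Image_def UNION_singleton_eq_range)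

lemma block_neq_carrier:
  assumes P: "partition_on S P" and "1 < card P" and x: "x \<in> S"
  shows "block P x \<noteq> S"
proof
  assume full: "block P x = S"
  have "block P y = S" if "y \<in> S" for y
    using block_eq_block[OF P x] that full by simp
  then have "P \<subseteq> {S}" using partition_on_eq_image_block[OF P] by auto
  then show False using \<open>1 < card P\<close> card_mono[of "{S}" P] by simp
qed

lemma sum_over_blocks:
  assumes "partition_on S P" "finite S"
  shows "(\<Sum>x\<in>S. f (block P x)) = (\<Sum>C\<in>P. real (card C) * f C)"
proof -
  have "(\<Sum>x\<in>S. f (block P x)) = (\<Sum>C\<in>P. \<Sum>x\<in>C. f (block P x))"
    using sum.partition[OF assms(2,1)] .
  also have "\<dots> = (\<Sum>C\<in>P. real (card C) * f C)"
    using block_eq[OF assms(1)] by (intro sum.cong) auto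
  finally show ?thesis .
qed

lemma sum_over_block_pairs:
  assumes A: "partition_on S A" and B: "partition_on S B" and "finite S"
  shows "(\<Sum>x\<in>S. f (block A x) (block B x)) = (\<Sum>(C, D)\<in>A \<times> B. real (card (C \<inter> D)) * f C D)"
proof -
  let ?g = "\<lambda>x. (block A x, block B x)"
  have fin: "finite (A \<times> B)" using assms finite_elements by blast
  have fibre: "{x \<in> S. ?g x = (C, D)} = C \<inter> D" if "C \<in> A" "D \<in> B" for C D
  proof (intro equalityI subsetI)
    fix x assume "x \<in> {x \<in> S. ?g x = (C, D)}"
    then show "x \<in> C \<inter> D" using in_block_self[OF A] in_block_self[OF B] by auto
  next
    fix x assume x: "x \<in> C \<inter> D"
    then have "x \<in> S" using that partition_onD1[OF A] by auto
    then show "x \<in> {x \<in> S. ?g x = (C, D)}" using x that block_eq[OF A] block_eq[OF B] by auto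
  qed
  have "?g ` S \<subseteq> A \<times> B" using block_mem[OF A] block_mem[OF B] by auto
  then have "(\<Sum>x\<in>S. f (block A x) (block B x)) = (\<Sum>p\<in>A \<times> B. \<Sum>x\<in>{x \<in> S. ?g x = p}. case_prod f (?g x))"
    using sum.group[OF \<open>finite S\<close> fin, of ?g "\<lambda>x. case_prod f (?g x)"] by simp
  also have "\<dots> = (\<Sum>(C, D)\<in>A \<times> B. real (card (C \<inter> D)) * f C D)"
    using fibre by (intro sum.cong) auto
  finally show ?thesis .
qed

lemma ent_term_ratio:
  assumes "0 < n"
  shows "ent_term (real k / real n) = real k * ((ln (real n) - ln (real k)) / real n)"
  using assms by (cases "k = 0") (simp_all add: ent_term_def ln_div field_simps)

lemma H_eq_average:
  assumes P: "partition_on S P" and "finite S" "S \<noteq> {}"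
  shows "H (card S) P = ln (card S) - (\<Sum>x\<in>S. ln (card (block P x))) / card S"
proof -
  have n: "0 < card S" using assms by (simp add: card_gt_0_iff)
  have "H (card S) P = (\<Sum>C\<in>P. real (card C) * ((ln (card S) - ln (card C)) / card S))"
    unfolding H_def ent_term_ratio[OF n] by simp
  also have "\<dots> = (\<Sum>x\<in>S. (ln (card S) - ln (card (block P x))) / card S)"
    using sum_over_blocks[OF P \<open>finite S\<close>, of "\<lambda>C. (ln (card S) - ln (card C)) / card S"] by simp
  also have "\<dots> = ln (card S) - (\<Sum>x\<in>S. ln (card (block P x))) / card S"
    using n by (simp add: sum_subtractf sum_divide_distrib[symmetric] field_simps)
  finally show ?thesis .
qed

lemma H2_eq_average:
  assumes A: "partition_on S A" and B: "partition_on S B" and "finite S" "S \<noteq> {}"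
  shows "H2 (card S) A B = ln (card S) - (\<Sum>x\<in>S. ln (card (block A x \<inter> block B x))) / card S"
proof -
  have n: "0 < card S" using assms by (simp add: card_gt_0_iff)
  have "H2 (card S) A B
      = (\<Sum>(C, D)\<in>A \<times> B. real (card (C \<inter> D)) * ((ln (card S) - ln (card (C \<inter> D))) / card S))"
    unfolding H2_def ent_term_ratio[OF n] by (simp add: case_prod_unfold)
  also have "\<dots> = (\<Sum>x\<in>S. (ln (card S) - ln (card (block A x \<inter> block B x))) / card S)"
    using sum_over_block_pairs[OF A B \<open>finite S\<close>, of "\<lambda>C D. (ln (card S) - ln (card (C \<inter> D))) / card S"]
    by simp
  also have "\<dots> = ln (card S) - (\<Sum>x\<in>S. ln (card (block A x \<inter> block B x))) / card S"
    using n by (simp add: sum_subtractf sum_divide_distrib[symmetric] field_simps)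
  finally show ?thesis .
qed

lemma card_block_inter_pos:
  assumes "partition_on S A" "partition_on S B" "finite S" "x \<in> S"
  shows "0 < card (block A x \<inter> block B x)"
  using assms in_block_self finite_block by (metis IntI card_gt_0_iff empty_iff finite_Int)

lemma card_block_pos: "partition_on S P \<Longrightarrow> finite S \<Longrightarrow> x \<in> S \<Longrightarrow> 0 < card (block P x)"
  using card_block_inter_pos[of S P P] by simp

lemma H_nonneg:
  assumes P: "partition_on S P" and "finite S" "S \<noteq> {}"
  shows "0 \<le> H (card S) P"
proof -
  have "(\<Sum>x\<in>S. ln (card (block P x))) \<le> (\<Sum>x\<in>S. ln (card S))"
    using card_mono[OF \<open>finite S\<close> block_subset[OF P]] card_block_pos[OF P \<open>finite S\<close>]
    by (intro sum_mono ln_mono) simp_all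
  then show ?thesis
    using H_eq_average[OF assms] assms by (simp add: card_gt_0_iff divide_le_eq mult.commute)
qed

lemma H_pos:
  assumes P: "partition_on S P" and "finite S" "S \<noteq> {}" and "1 < card P"
  shows "0 < H (card S) P"
proof -
  have "card (block P x) < card S" if "x \<in> S" for x
    using psubset_card_mono[OF \<open>finite S\<close>] block_subset[OF P that] block_neq_carrier[OF P \<open>1 < card P\<close> that]
    by blast
  then have "(\<Sum>x\<in>S. ln (card (block P x))) < (\<Sum>x\<in>S. ln (card S))"
    using card_block_pos[OF P \<open>finite S\<close>] assms by (intro sum_strict_mono ln_strict_mono) auto
  then show ?thesis
    using H_eq_average[OF P \<open>finite S\<close> \<open>S \<noteq> {}\<close>] assms by (simp add: card_gt_0_iff divide_less_eq mult.commute)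
qed

lemma H_le_H2:
  assumes A: "partition_on S A" and B: "partition_on S B" and "finite S" "S \<noteq> {}"
  shows "H (card S) A \<le> H2 (card S) A B"
proof -
  have "(\<Sum>x\<in>S. ln (card (block A x \<inter> block B x))) \<le> (\<Sum>x\<in>S. ln (card (block A x)))"
    using card_block_inter_pos[OF A B \<open>finite S\<close>] finite_block[OF A \<open>finite S\<close>]
    by (intro sum_mono ln_mono) (auto intro!: card_mono)
  then show ?thesis
    using H_eq_average[OF A \<open>finite S\<close> \<open>S \<noteq> {}\<close>] H2_eq_average[OF assms] assms
    by (simp add: card_gt_0_iff divide_right_mono)
qed

text \<open>\<open>p\<^sub>A(x) p\<^sub>B(x) / p\<^sub>A\<^sub>B(x)\<close>, with \<open>n M(A,B) = - \<Sum>x. ln\<close> of it; \<open>ln t \<le> t - 1\<close> then gives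
  Gibbs' inequality, since the ratio sums to at most \<open>n\<close>.\<close>
definition independence_ratio :: "'a set \<Rightarrow> 'a set set \<Rightarrow> 'a set set \<Rightarrow> 'a \<Rightarrow> real" where
  "independence_ratio S A B x =
     real (card (block A x)) * real (card (block B x)) / (real (card S) * real (card (block A x \<inter> block B x)))"

context
  fixes S :: "nat set" and A B :: "nat set set"
  assumes A: "partition_on S A" and B: "partition_on S B" and fin: "finite S" and ne: "S \<noteq> {}"
begin

lemma independence_ratio_pos: "x \<in> S \<Longrightarrow> 0 < independence_ratio S A B x"
  using card_block_pos[OF A fin] card_block_pos[OF B fin] card_block_inter_pos[OF A B fin] fin ne
  by (simp add: independence_ratio_def card_gt_0_iff)

lemma card_mult_MI_eq_sum_neg_ln_independence_ratio:
  "card S * MI (card S) A B = (\<Sum>x\<in>S. - ln (independence_ratio S A B x))"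
proof -
  have n: "0 < card S" using fin ne by (simp add: card_gt_0_iff)
  have "ln (independence_ratio S A B x) = ln (card (block A x)) + ln (card (block B x))
      - ln (card S) - ln (card (block A x \<inter> block B x))" if "x \<in> S" for x
    using card_block_pos[OF A fin that] card_block_pos[OF B fin that] card_block_inter_pos[OF A B fin that] n
    by (simp add: independence_ratio_def ln_div ln_mult)
  then have "(\<Sum>x\<in>S. - ln (independence_ratio S A B x)) = card S * ln (card S)
      + (\<Sum>x\<in>S. ln (card (block A x \<inter> block B x)))
      - (\<Sum>x\<in>S. ln (card (block A x))) - (\<Sum>x\<in>S. ln (card (block B x)))"
    by (simp add: sum.distrib sum_subtractf sum_negf)
  also have "\<dots> = card S * MI (card S) A B"
    unfolding MI_def H_eq_average[OF A fin ne] H_eq_average[OF B fin ne] H2_eq_average[OF A B fin ne]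
    using n by (simp add: field_simps)
  finally show ?thesis by simp
qed

lemma sum_independence_ratio_le: "(\<Sum>x\<in>S. independence_ratio S A B x) \<le> card S"
proof -
  let ?n = "real (card S)"
  have n: "0 < ?n" using fin ne by (simp add: card_gt_0_iff)
  have "(\<Sum>x\<in>S. independence_ratio S A B x) = (\<Sum>(C, D)\<in>A \<times> B. real (card (C \<inter> D)) * (real (card C) * card D / (?n * card (C \<inter> D))))"
    unfolding independence_ratio_def by (rule sum_over_block_pairs[OF A B fin])
  also have "\<dots> \<le> (\<Sum>(C, D)\<in>A \<times> B. real (card C) * card D / ?n)"
    using n by (intro sum_mono) (auto simp: field_simps)
  also have "\<dots> = (\<Sum>C\<in>A. real (card C)) * (\<Sum>D\<in>B. real (card D)) / ?n"
    by (simp add: sum_product sum.cartesian_product case_prod_unfold sum_divide_distrib)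
  also have "\<dots> = ?n"
    using product_partition[OF A finite_block_member[OF A fin]] product_partition[OF B finite_block_member[OF B fin]] n
    by (simp flip: of_nat_sum)
  finally show ?thesis .
qed

lemma sum_one_minus_independence_ratio_nonneg: "0 \<le> (\<Sum>x\<in>S. 1 - independence_ratio S A B x)"
  using sum_independence_ratio_le by (simp add: sum_subtractf)

lemma MI_nonneg: "0 \<le> MI (card S) A B"
proof -
  have "(\<Sum>x\<in>S. 1 - independence_ratio S A B x) \<le> (\<Sum>x\<in>S. - ln (independence_ratio S A B x))"
    using ln_le_minus_one independence_ratio_pos by (intro sum_mono) force
  then have "0 \<le> card S * MI (card S) A B"
    using sum_one_minus_independence_ratio_nonneg card_mult_MI_eq_sum_neg_ln_independence_ratio by linarith
  then show ?thesis
    using fin ne by (simp add: card_gt_0_iff zero_le_mult_iff)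
qed

lemma MI_pos:
  assumes x0: "x0 \<in> S" and "block B x0 \<subseteq> block A x0" and "block A x0 \<noteq> S"
  shows "0 < MI (card S) A B"
proof -
  have "block A x0 \<inter> block B x0 = block B x0" using assms by blast
  then have "independence_ratio S A B x0 = card (block A x0) / card S"
    using card_block_pos[OF B fin x0] by (simp add: independence_ratio_def)
  moreover have "card (block A x0) < card S"
    using psubset_card_mono[OF fin] block_subset[OF A x0] \<open>block A x0 \<noteq> S\<close> by blast
  ultimately have "independence_ratio S A B x0 \<noteq> 1"
    by simp
  then have "1 - independence_ratio S A B x0 < - ln (independence_ratio S A B x0)"
    using ln_le_minus_one ln_eq_minus_one independence_ratio_pos[OF x0] by force
  then have "(\<Sum>x\<in>S. 1 - independence_ratio S A B x) < (\<Sum>x\<in>S. - ln (independence_ratio S A B x))"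
    using ln_le_minus_one independence_ratio_pos fin x0 by (intro sum_strict_mono_ex1) force+
  then have "0 < card S * MI (card S) A B"
    using sum_one_minus_independence_ratio_nonneg card_mult_MI_eq_sum_neg_ln_independence_ratio by linarith
  then show ?thesis
    using fin ne by (simp add: card_gt_0_iff zero_less_mult_iff)
qed

end

lemma ln_of_nat_diff_le_iff:
  assumes "0 < p" "0 < q" "0 < r" "0 < s"
  shows "ln (real p) - ln (real q) \<le> ln (real r) - ln (real s) \<longleftrightarrow> p * s \<le> r * q"
proof -
  have "ln (real p) - ln (real q) \<le> ln (real r) - ln (real s) \<longleftrightarrow> ln (real (p * s)) \<le> ln (real (r * q))"
    using assms by (auto simp: ln_mult)
  then show ?thesis using assms by (simp flip: of_nat_mult)
qed

lemma ln_of_nat_diff_eq_iff: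
  assumes "0 < p" "0 < q" "0 < r" "0 < s"
  shows "ln (real p) - ln (real q) = ln (real r) - ln (real s) \<longleftrightarrow> p * s = r * q"
  using ln_of_nat_diff_le_iff[OF assms] ln_of_nat_diff_le_iff[OF assms(3,4,1,2)] by (auto simp: mult.commute)

lemma H2_minus_H_eq:
  assumes A: "partition_on S A" and B: "partition_on S B" and "finite S" "S \<noteq> {}"
  shows "H2 (card S) A B - H (card S) B
    = (\<Sum>x\<in>S. ln (card (block B x)) - ln (card (block A x \<inter> block B x))) / card S"
  unfolding H2_eq_average[OF assms] H_eq_average[OF B \<open>finite S\<close> \<open>S \<noteq> {}\<close>]
  by (simp add: sum_subtractf diff_divide_distrib)

lemma card_inter_improved_le:
  assumes "finite b" "a \<inter> b \<subseteq> b'" "b' \<subseteq> a \<or> b' \<subseteq> b"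
  shows "card b' * card (a \<inter> b) \<le> card b * card (a \<inter> b')"
proof (cases "b' \<subseteq> a")
  case True
  then have "a \<inter> b' = b'" by blast
  then show ?thesis using card_mono[OF \<open>finite b\<close>, of "a \<inter> b"] by (simp add: mult.commute)
next
  case False
  then have "b' \<subseteq> b" "a \<inter> b' = a \<inter> b" using assms by blast+
  then show ?thesis using card_mono[OF \<open>finite b\<close> \<open>b' \<subseteq> b\<close>] by simp
qed

lemma card_inter_improved_eqD:
  assumes "finite b" "finite b'" "a \<inter> b \<noteq> {}" "a \<inter> b \<subseteq> b'" "b' \<subseteq> a \<or> b' \<subseteq> b" "b' \<noteq> b"
    and eq: "card b' * card (a \<inter> b) = card b * card (a \<inter> b')"
  shows "b \<subseteq> a" and "card (a \<inter> b) < card (a \<inter> b')"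
proof -
  have pos: "0 < card (a \<inter> b)" "0 < card b'" using assms by (auto simp: card_gt_0_iff)
  have "b' \<subseteq> a"
  proof (rule ccontr)
    assume "\<not> b' \<subseteq> a"
    then have "b' \<subseteq> b" "a \<inter> b' = a \<inter> b" using assms by blast+
    then have "card b' = card b" using eq pos by simp
    then show False using card_subset_eq[OF \<open>finite b\<close> \<open>b' \<subseteq> b\<close>] \<open>b' \<noteq> b\<close> by blast
  qed
  then have "a \<inter> b' = b'" by blast
  then have "card (a \<inter> b) = card b" using eq pos by simp
  then show "b \<subseteq> a" using card_subset_eq[OF \<open>finite b\<close>, of "a \<inter> b"] by blast
  then have "b \<subset> b'" using \<open>a \<inter> b \<subseteq> b'\<close> \<open>b' \<noteq> b\<close> by blast
  then show "card (a \<inter> b) < card (a \<inter> b')"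
    using \<open>a \<inter> b' = b'\<close> \<open>card (a \<inter> b) = card b\<close> psubset_card_mono[OF \<open>finite b'\<close>] by simp
qed

lemma agrees_iff_block: "agrees P Q x y \<longleftrightarrow> (y \<in> block P x \<longleftrightarrow> y \<in> block Q x)"
  by (simp add: agrees_def same_cluster_def block_def)

locale agreement_preserving =
  fixes S :: "nat set" and A B B' :: "nat set set"
  assumes A: "partition_on S A" and B: "partition_on S B" and B': "partition_on S B'"
    and preserves: "\<And>x y. x \<in> S \<Longrightarrow> y \<in> S \<Longrightarrow> x \<noteq> y \<Longrightarrow> agrees A B x y \<Longrightarrow> agrees A B' x y"
begin

lemma block_inter_subset:
  assumes x: "x \<in> S"
  shows "block A x \<inter> block B x \<subseteq> block B' x"
proof
  fix y assume y: "y \<in> block A x \<inter> block B x"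
  show "y \<in> block B' x"
  proof (cases "y = x")
    case True then show ?thesis using in_block_self[OF B' x] by simp
  next
    case False
    have "y \<in> S" using y block_subset[OF A x] by blast
    then show ?thesis using y preserves[OF x _ False[symmetric]] by (simp add: agrees_iff_block)
  qed
qed

lemma mem_block_if_separated:
  assumes x: "x \<in> S" and "y \<in> block B' x" "y \<notin> block A x"
  shows "y \<in> block B x"
proof -
  have "y \<in> S" "x \<noteq> y" using assms block_subset[OF B' x] in_block_self[OF A x] by auto
  then show ?thesis using assms preserves[OF x] by (auto simp: agrees_iff_block)
qed

lemma block_improved_cases:
  assumes x: "x \<in> S"
  shows "block B' x \<subseteq> block A x \<or> block B' x \<subseteq> block B x"
proof (rule ccontr)
  assume "\<not> ?thesis"
  then obtain y z where y: "y \<in> block B' x" "y \<notin> block A x" and z: "z \<in> block B' x" "z \<notin> block B x"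
    by blast
  have yB: "y \<in> block B x" using mem_block_if_separated[OF x y] .
  have zA: "z \<in> block A x" using mem_block_if_separated[OF x z(1)] z(2) by blast
  have yS: "y \<in> S" using y block_subset[OF B' x] by auto
  have "z \<in> block B' y" using block_eq_block[OF B' x y(1)] z by simp
  moreover have "z \<notin> block A y"
    using block_eq_block[OF A x zA] block_eq_block[OF A yS] y(2) in_block_self[OF A yS] by metis
  ultimately have "z \<in> block B y" using mem_block_if_separated[OF yS] by blast
  then show False using block_eq_block[OF B x yB] z(2) by simp
qed

context
  assumes fin: "finite S" and ne: "S \<noteq> {}"
begin

lemma card_block_inter_improved_le:
  assumes x: "x \<in> S"
  shows "card (block B' x) * card (block A x \<inter> block B x) \<le> card (block B x) * card (block A x \<inter> block B' x)"
  using card_inter_improved_le[OF finite_block[OF B fin x] block_inter_subset[OF x] block_improved_cases[OF x]] .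

lemma card_block_inter_improved_eqD:
  assumes x: "x \<in> S" and "block B' x \<noteq> block B x"
    and "card (block B' x) * card (block A x \<inter> block B x) = card (block B x) * card (block A x \<inter> block B' x)"
  shows "block B x \<subseteq> block A x" and "card (block A x \<inter> block B x) < card (block A x \<inter> block B' x)"
  using card_inter_improved_eqD[OF finite_block[OF B fin x] finite_block[OF B' fin x] _ block_inter_subset[OF x]
      block_improved_cases[OF x] assms(2,3)] in_block_self[OF A x] in_block_self[OF B x]
  by blast+

lemma ln_joint_improved_le:
  assumes x: "x \<in> S"
  shows "ln (card (block A x \<inter> block B x)) \<le> ln (card (block A x \<inter> block B' x))"
  using block_inter_subset[OF x] finite_block[OF B' fin x] card_block_inter_pos[OF A B fin x]
  by (intro ln_mono) (auto intro!: card_mono)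

lemma H2_improved_le: "H2 (card S) A B' \<le> H2 (card S) A B"
  unfolding H2_eq_average[OF A B fin ne] H2_eq_average[OF A B' fin ne]
  using ln_joint_improved_le by (simp add: divide_right_mono sum_mono)

lemma ln_conditional_improved_le:
  assumes x: "x \<in> S"
  shows "ln (card (block B' x)) - ln (card (block A x \<inter> block B' x))
    \<le> ln (card (block B x)) - ln (card (block A x \<inter> block B x))"
  using card_block_inter_improved_le[OF x] card_block_pos[OF B fin x] card_block_pos[OF B' fin x]
    card_block_inter_pos[OF A B fin x] card_block_inter_pos[OF A B' fin x]
  by (simp add: ln_of_nat_diff_le_iff)

lemma conditional_entropy_improved_le: "H2 (card S) A B' - H (card S) B' \<le> H2 (card S) A B - H (card S) B"
  unfolding H2_minus_H_eq[OF A B fin ne] H2_minus_H_eq[OF A B' fin ne]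
  using ln_conditional_improved_le by (simp add: divide_right_mono sum_mono)

lemma entropy_improved_strict:
  assumes "B' \<noteq> B"
  shows "H2 (card S) A B' - H (card S) B' < H2 (card S) A B - H (card S) B
    \<or> H2 (card S) A B' < H2 (card S) A B \<and> (\<exists>x\<in>S. block B x \<subseteq> block A x)"
proof (cases "\<exists>x\<in>S. ln (card (block B' x)) - ln (card (block A x \<inter> block B' x))
    < ln (card (block B x)) - ln (card (block A x \<inter> block B x))")
  case True
  then have "(\<Sum>x\<in>S. ln (card (block B' x)) - ln (card (block A x \<inter> block B' x)))
      < (\<Sum>x\<in>S. ln (card (block B x)) - ln (card (block A x \<inter> block B x)))"
    using ln_conditional_improved_le fin by (intro sum_strict_mono_ex1) auto
  then show ?thesis
    unfolding H2_minus_H_eq[OF A B fin ne] H2_minus_H_eq[OF A B' fin ne]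
    using fin ne by (simp add: divide_strict_right_mono card_gt_0_iff)
next
  case False
  obtain x where x: "x \<in> S" "block B' x \<noteq> block B x"
    using assms partition_on_eq_image_block[OF B] partition_on_eq_image_block[OF B'] image_cong by metis
  have "ln (card (block B' x)) - ln (card (block A x \<inter> block B' x))
      = ln (card (block B x)) - ln (card (block A x \<inter> block B x))"
    using False ln_conditional_improved_le[OF x(1)] x(1) by fastforce
  then have "card (block B' x) * card (block A x \<inter> block B x) = card (block B x) * card (block A x \<inter> block B' x)"
    using card_block_pos[OF B fin x(1)] card_block_pos[OF B' fin x(1)]
      card_block_inter_pos[OF A B fin x(1)] card_block_inter_pos[OF A B' fin x(1)]
    by (simp add: ln_of_nat_diff_eq_iff)
  note improved = card_block_inter_improved_eqD[OF x this]
  have "(\<Sum>x\<in>S. ln (card (block A x \<inter> block B x))) < (\<Sum>x\<in>S. ln (card (block A x \<inter> block B' x)))"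
  proof (rule sum_strict_mono_ex1[OF fin])
    show "\<exists>x\<in>S. ln (card (block A x \<inter> block B x)) < ln (card (block A x \<inter> block B' x))"
      using improved(2) card_block_inter_pos[OF A B fin x(1)] by (intro bexI[OF _ x(1)]) simp
  qed (use ln_joint_improved_le in blast)
  then show ?thesis
    unfolding H2_eq_average[OF A B fin ne] H2_eq_average[OF A B' fin ne]
    using improved(1) fin ne x(1) by (auto simp: divide_strict_right_mono card_gt_0_iff)
qed

end

end

lemma NMI_VI_improved:
  fixes n :: nat and A B B' :: "nat set set"
  assumes "0 < H n A" "0 \<le> H n B" "0 \<le> H n B'" "0 < H2 n A B" "0 \<le> MI n A B"
    and "H2 n A B' \<le> H2 n A B" and "H2 n A B' - H n B' \<le> H2 n A B - H n B"
    and "H2 n A B' - H n B' < H2 n A B - H n B \<or> H2 n A B' < H2 n A B \<and> 0 < MI n A B"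
  shows "NMI n A B < NMI n A B' \<and> VI n A B' < VI n A B"
proof
  show "VI n A B' < VI n A B"
    using assms(6-8) unfolding VI_def by linarith
  define a b b' c c' where "a = H n A" "b = H n B" "b' = H n B'" "c = H2 n A B" "c' = H2 n A B'"
  have pos: "0 < a + b" "0 < a + b'" using assms(1-3) by (simp_all add: a_b_b'_c_c'_def)
  have "c * (a + b') - c' * (a + b) = c * ((c - b) - (c' - b')) + (c - c') * (a + b - c)"
    by (simp add: algebra_simps)
  also have "\<dots> > 0"
    using assms(4-8) unfolding MI_def a_b_b'_c_c'_def[symmetric]
    by (auto intro: add_pos_nonneg add_nonneg_pos)
  finally have "c' / (a + b') < c / (a + b)"
    using pos by (simp add: field_simps)
  moreover have "NMI n A B = 2 - 2 * (c / (a + b))" "NMI n A B' = 2 - 2 * (c' / (a + b'))"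
    using pos by (simp_all add: NMI_def MI_def a_b_b'_c_c'_def[symmetric] field_simps)
  ultimately show "NMI n A B < NMI n A B'" by simp
qed

theorem mainTheorem11:
  fixes n :: nat and A B B' :: "nat set set"
  assumes "clustering n A" and "clustering n B" and "clustering n B'"
    and "1 < card A" and "card A < n"
    and "consistent_improvement n A B B'"
  shows "NMI n A B' > NMI n A B \<and> VI n A B' < VI n A B"
proof -
  define S where "S = {1..n}"
  have A: "partition_on S A" and B: "partition_on S B" and B': "partition_on S B'"
    using assms(1-3) by (simp_all add: clustering_def S_def)
  have fin: "finite S" by (simp add: S_def)
  have ne: "S \<noteq> {}" using A \<open>1 < card A\<close> partition_on_empty[of A] by (cases "S = {}") simp_all
  interpret agreement_preserving S A B B'
    using A B B' assms(6) by unfold_locales (auto simp: consistent_improvement_def S_def)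
  have "B' \<noteq> B" using assms(6) by (simp add: consistent_improvement_def)
  have "NMI (card S) A B < NMI (card S) A B' \<and> VI (card S) A B' < VI (card S) A B"
  proof (rule NMI_VI_improved)
    show "0 < H (card S) A" using H_pos[OF A fin ne \<open>1 < card A\<close>] .
    then show "0 < H2 (card S) A B" using H_le_H2[OF A B fin ne] by linarith
    show "0 \<le> H (card S) B" "0 \<le> H (card S) B'" using H_nonneg[OF B fin ne] H_nonneg[OF B' fin ne] .
    show "0 \<le> MI (card S) A B" using MI_nonneg[OF A B fin ne] .
    show "H2 (card S) A B' \<le> H2 (card S) A B" using H2_improved_le[OF fin ne] .
    show "H2 (card S) A B' - H (card S) B' \<le> H2 (card S) A B - H (card S) B"
      using conditional_entropy_improved_le[OF fin ne] .
    show "H2 (card S) A B' - H (card S) B' < H2 (card S) A B - H (card S) B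
      \<or> H2 (card S) A B' < H2 (card S) A B \<and> 0 < MI (card S) A B"
      using entropy_improved_strict[OF fin ne \<open>B' \<noteq> B\<close>] MI_pos[OF A B fin ne]
        block_neq_carrier[OF A \<open>1 < card A\<close>] by blast
  qed
  then show ?thesis by (simp add: S_def)
qed

end
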